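(* Let $g_1,\dots,g_\ell,h_1,\dots,h_m\in\mathbb{R}[x]=\mathbb{R}[x_1,\dots,x_n]$, $g_0=1$, $S=\{x: g_i(x)\ge0,\ i=1,\dots,\ell\}$, $I=\langle h_1,\dots,h_m\rangle$, $K=S\cap\mathcal{V}(I)$, and suppose $\mathcal{I}(K)=I$. Fix an integer $k$ with $k\ge \deg g_i$ and $k\ge\deg h_j$ for all $i,j$, let $d_i=\max\{d\in\mathbb{N}: 2d+\deg g_i\le k\}$, $e_j=k-\deg h_j$, $\Lambda(d)=\{\alpha\in\mathbb{N}^n:|\alpha|\le d\}$, $X=\prod_{i=0}^\ell\mathbb{R}[x]_{d_i}^{\Lambda(d_i)}\times\prod_{j=1}^m\mathbb{R}[x]_{e_j}$, and $\phi:X\to\mathbb{R}[x]$, $\phi\big((q_{0\alpha})_{\alpha\in\Lambda(d_0)},\dots,(q_{\ell\alpha})_{\alpha\in\Lambda(d_\ell)},r_1,\dots,r_m\big)=\sum_{i=0}^\ell\sum_{\alpha\in\Lambda(d_i)}q_{i\alpha}^2g_i+\sum_{j=1}^m r_jh_j$. Then for $q\in X$, $\phi(q)\in I$ if and only if $q_{i\alpha}\in(I:\langle g_i\rangle)=\{s\in\mathbb{R}[x]: sg_i\in I\}$ for all $\alpha\in\Lambda(d_i)$ and all $i=0,1,\dots,\ell$.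
   Context: $\mathbb{R}[x]_d$ denotes real polynomials of degree at most $d$. $\mathcal{V}(I)=\{x\in\mathbb{R}^n:p(x)=0\ \forall p\in I\}$ and $\mathcal{I}(K)=\{p\in\mathbb{R}[x]: p|_K=0\}$. *)

theory Defs
  imports "HOL-Analysis.Analysis" "HOL-Library.Poly_Mapping"
begin

text \<open>Real multivariate polynomials in the variables indexed by a finite type 'n
  (so R[x_1,...,x_n] with n = CARD('n)): finitely supported maps from monomials
  (exponent vectors 'n =>0 nat) to real coefficients; multiplication is the
  library's convolution product, giving a commutative ring.\<close>

type_synonym 'n mpoly = "('n \<Rightarrow>\<^sub>0 nat) \<Rightarrow>\<^sub>0 real"

definition mon_deg :: "('n::finite \<Rightarrow>\<^sub>0 nat) \<Rightarrow> nat" where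
  "mon_deg \<alpha> = (\<Sum>i\<in>UNIV. Poly_Mapping.lookup \<alpha> i)"

text \<open>Total degree (the zero polynomial gets degree 0 by convention).\<close>
definition total_deg :: "'n::finite mpoly \<Rightarrow> nat" where
  "total_deg p = Max (insert 0 (mon_deg ` Poly_Mapping.keys p))"

definition mpoly_eval :: "'n::finite mpoly \<Rightarrow> real ^ 'n \<Rightarrow> real" where
  "mpoly_eval p x = (\<Sum>\<alpha>\<in>Poly_Mapping.keys p. Poly_Mapping.lookup p \<alpha> * (\<Prod>i\<in>UNIV. (x $ i) ^ Poly_Mapping.lookup \<alpha> i))"

definition polys_deg_le :: "nat \<Rightarrow> 'n::finite mpoly set" where
  "polys_deg_le d = {p. total_deg p \<le> d}"

definition Lambda :: "nat \<Rightarrow> ('n::finite \<Rightarrow>\<^sub>0 nat) set" where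
  "Lambda d = {\<alpha>. mon_deg \<alpha> \<le> d}"

definition ideal_gen :: "nat \<Rightarrow> (nat \<Rightarrow> 'n::finite mpoly) \<Rightarrow> 'n mpoly set" where
  "ideal_gen m h = {p. \<exists>a. p = (\<Sum>j\<in>{1..m}. a j * h j)}"

definition zero_set :: "'n::finite mpoly set \<Rightarrow> (real ^ 'n) set" where
  "zero_set I = {x. \<forall>p\<in>I. mpoly_eval p x = 0}"

definition vanishing_ideal :: "(real ^ 'n) set \<Rightarrow> 'n::finite mpoly set" where
  "vanishing_ideal K = {p. \<forall>x\<in>K. mpoly_eval p x = 0}"

definition colon_ideal :: "'n::finite mpoly set \<Rightarrow> 'n mpoly \<Rightarrow> 'n mpoly set" where
  "colon_ideal I g = {s. s * g \<in> I}"

end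

theory Submission imports Defs begin

text \<open>Since \<open>I = \<I>(K)\<close>, membership in \<open>I\<close> is tested pointwise on \<open>K\<close>. There every \<open>h\<^sub>j\<close>
  vanishes and every \<open>g\<^sub>i\<close> is nonnegative, so \<open>\<phi>(q)\<close> evaluates to a sum of nonnegative terms
  \<open>q\<^sub>i\<^sub>\<alpha>(x)\<^sup>2 g\<^sub>i(x)\<close>; it vanishes on \<open>K\<close> iff each \<open>q\<^sub>i\<^sub>\<alpha> g\<^sub>i\<close> does, i.e. iff \<open>q\<^sub>i\<^sub>\<alpha> \<in> (I : \<langle>g\<^sub>i\<rangle>)\<close>.\<close>

definition monomial_eval :: "('n::finite \<Rightarrow>\<^sub>0 nat) \<Rightarrow> real ^ 'n \<Rightarrow> real" where
  "monomial_eval \<alpha> x = (\<Prod>i\<in>UNIV. (x $ i) ^ Poly_Mapping.lookup \<alpha> i)"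

lemma monomial_eval_add: "monomial_eval (\<alpha> + \<beta>) x = monomial_eval \<alpha> x * monomial_eval \<beta> x"
  by (simp add: monomial_eval_def lookup_add power_add prod.distrib)

lemma mpoly_eval_superset:
  assumes "finite A" "Poly_Mapping.keys p \<subseteq> A"
  shows "mpoly_eval p x = (\<Sum>\<alpha>\<in>A. Poly_Mapping.lookup p \<alpha> * monomial_eval \<alpha> x)"
  unfolding mpoly_eval_def monomial_eval_def
  by (rule sum.mono_neutral_left) (use assms in \<open>auto simp: in_keys_iff\<close>)

lemma mpoly_eval_0 [simp]: "mpoly_eval 0 x = 0"
  by (simp add: mpoly_eval_def)

lemma mpoly_eval_1 [simp]: "mpoly_eval 1 x = 1"
  by (simp add: mpoly_eval_def)

lemma mpoly_eval_add [simp]: "mpoly_eval (p + q) x = mpoly_eval p x + mpoly_eval q x"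
proof -
  have "finite (Poly_Mapping.keys p \<union> Poly_Mapping.keys q)" by simp
  from mpoly_eval_superset[OF this] show ?thesis
    using keys_add[of p q] by (simp add: lookup_add distrib_right sum.distrib)
qed

lemma mpoly_eval_sum [simp]: "mpoly_eval (\<Sum>i\<in>A. f i) x = (\<Sum>i\<in>A. mpoly_eval (f i) x)"
  by (induction A rule: infinite_finite_induct) auto

lemma mpoly_eval_single: "mpoly_eval (Poly_Mapping.single \<alpha> c) x = c * monomial_eval \<alpha> x"
  by (simp add: mpoly_eval_def monomial_eval_def)

lemma mpoly_eq_sum_single:
  "p = (\<Sum>\<alpha>\<in>Poly_Mapping.keys p. Poly_Mapping.single \<alpha> (Poly_Mapping.lookup p \<alpha>))"
  by (rule poly_mapping_eqI)
     (auto simp: lookup_sum lookup_single when_def in_keys_iff sum.delta' intro: sum.neutral)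

lemma mpoly_eval_as_sum:
  "mpoly_eval p x = (\<Sum>\<alpha>\<in>Poly_Mapping.keys p. Poly_Mapping.lookup p \<alpha> * monomial_eval \<alpha> x)"
  by (simp add: mpoly_eval_def monomial_eval_def)

lemma mpoly_eval_single_mult:
  "mpoly_eval (Poly_Mapping.single \<alpha> c * q) x = c * monomial_eval \<alpha> x * mpoly_eval q x"
proof -
  have "Poly_Mapping.single \<alpha> c * q =
      (\<Sum>\<beta>\<in>Poly_Mapping.keys q. Poly_Mapping.single \<alpha> c * Poly_Mapping.single \<beta> (Poly_Mapping.lookup q \<beta>))"
    by (subst mpoly_eq_sum_single[of q]) (simp add: sum_distrib_left)
  also have "mpoly_eval \<dots> x =
      c * monomial_eval \<alpha> x * (\<Sum>\<beta>\<in>Poly_Mapping.keys q. Poly_Mapping.lookup q \<beta> * monomial_eval \<beta> x)"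
    by (simp add: mult_single mpoly_eval_single monomial_eval_add sum_distrib_left mult_ac)
  finally show ?thesis
    by (simp only: mpoly_eval_as_sum)
qed

lemma mpoly_eval_mult [simp]: "mpoly_eval (p * q) x = mpoly_eval p x * mpoly_eval q x"
proof -
  have "p * q = (\<Sum>\<alpha>\<in>Poly_Mapping.keys p. Poly_Mapping.single \<alpha> (Poly_Mapping.lookup p \<alpha>) * q)"
    by (subst mpoly_eq_sum_single[of p]) (simp add: sum_distrib_right)
  also have "mpoly_eval \<dots> x =
      (\<Sum>\<alpha>\<in>Poly_Mapping.keys p. Poly_Mapping.lookup p \<alpha> * monomial_eval \<alpha> x) * mpoly_eval q x"
    by (simp add: mpoly_eval_single_mult sum_distrib_right)
  finally show ?thesis
    by (simp only: mpoly_eval_as_sum)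
qed

lemma mpoly_eval_power [simp]: "mpoly_eval (p ^ n) x = mpoly_eval p x ^ n"
  by (induction n) auto

lemma finite_Lambda: "finite (Lambda d :: ('n::finite \<Rightarrow>\<^sub>0 nat) set)"
proof -
  have "Poly_Mapping.lookup ` (Lambda d :: ('n \<Rightarrow>\<^sub>0 nat) set) \<subseteq> PiE UNIV (\<lambda>_. {0..d})"
  proof clarify
    fix \<alpha> :: "'n \<Rightarrow>\<^sub>0 nat" assume "\<alpha> \<in> Lambda d"
    moreover have "Poly_Mapping.lookup \<alpha> i \<le> mon_deg \<alpha>" for i
      unfolding mon_deg_def by (rule member_le_sum) auto
    ultimately show "Poly_Mapping.lookup \<alpha> \<in> PiE UNIV (\<lambda>_. {0..d})"
      by (auto simp: Lambda_def) (meson order_trans)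
  qed
  then have "finite (Poly_Mapping.lookup ` (Lambda d :: ('n \<Rightarrow>\<^sub>0 nat) set))"
    by (rule finite_subset) (simp add: finite_PiE)
  moreover have "inj_on Poly_Mapping.lookup (Lambda d :: ('n \<Rightarrow>\<^sub>0 nat) set)"
    by (rule inj_onI) (simp add: poly_mapping_eqI)
  ultimately show ?thesis by (rule finite_imageD)
qed

lemma sum_weighted_squares_eq_0_iff:
  fixes f :: "'i \<Rightarrow> 'j \<Rightarrow> real"
  assumes "finite A" "\<And>i. i \<in> A \<Longrightarrow> finite (B i)" "\<And>i. i \<in> A \<Longrightarrow> w i \<ge> 0"
  shows "(\<Sum>i\<in>A. \<Sum>j\<in>B i. (f i j)\<^sup>2 * w i) = 0 \<longleftrightarrow> (\<forall>i\<in>A. \<forall>j\<in>B i. f i j * w i = 0)"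
proof -
  have "(f i j)\<^sup>2 * w i = 0 \<longleftrightarrow> f i j * w i = 0" for i j
    by (simp add: power2_eq_square)
  moreover have "(f i j)\<^sup>2 * w i \<ge> 0" if "i \<in> A" for i j
    using assms(3)[OF that] by simp
  ultimately show ?thesis
    using assms(1,2) by (simp add: sum_nonneg_eq_0_iff sum_nonneg)
qed

lemma vanishing_ideal_add_right_iff:
  "p \<in> vanishing_ideal K \<Longrightarrow> a + p \<in> vanishing_ideal K \<longleftrightarrow> a \<in> vanishing_ideal K"
  by (simp add: vanishing_ideal_def)

lemma weighted_sos_plus_in_vanishing_ideal_iff:
  assumes "finite A" "\<And>i. i \<in> A \<Longrightarrow> finite (B i)"
    and "\<And>i x. i \<in> A \<Longrightarrow> x \<in> K \<Longrightarrow> mpoly_eval (g i) x \<ge> 0"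
    and "p \<in> vanishing_ideal K"
  shows "(\<Sum>i\<in>A. \<Sum>\<alpha>\<in>B i. (q i \<alpha>)\<^sup>2 * g i) + p \<in> vanishing_ideal K
    \<longleftrightarrow> (\<forall>i\<in>A. \<forall>\<alpha>\<in>B i. q i \<alpha> \<in> colon_ideal (vanishing_ideal K) (g i))"
proof -
  have "(\<Sum>i\<in>A. \<Sum>\<alpha>\<in>B i. (q i \<alpha>)\<^sup>2 * g i) \<in> vanishing_ideal K \<longleftrightarrow>
      (\<forall>x\<in>K. (\<Sum>i\<in>A. \<Sum>\<alpha>\<in>B i. (mpoly_eval (q i \<alpha>) x)\<^sup>2 * mpoly_eval (g i) x) = 0)"
    by (simp add: vanishing_ideal_def)
  also have "\<dots> \<longleftrightarrow>
      (\<forall>x\<in>K. \<forall>i\<in>A. \<forall>\<alpha>\<in>B i. mpoly_eval (q i \<alpha>) x * mpoly_eval (g i) x = 0)"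
    using assms(1-3) by (intro ball_cong refl sum_weighted_squares_eq_0_iff) auto
  also have "\<dots> \<longleftrightarrow> (\<forall>i\<in>A. \<forall>\<alpha>\<in>B i. q i \<alpha> \<in> colon_ideal (vanishing_ideal K) (g i))"
    by (auto simp: colon_ideal_def vanishing_ideal_def)
  finally show ?thesis
    using vanishing_ideal_add_right_iff[OF assms(4)] by simp
qed

theorem lemma2p4:
  fixes g h :: "nat \<Rightarrow> 'n::finite mpoly"
    and l m k :: nat
    and d e :: "nat \<Rightarrow> nat"
    and S K :: "(real ^ 'n) set"
    and I :: "'n mpoly set"
    and q :: "nat \<Rightarrow> ('n \<Rightarrow>\<^sub>0 nat) \<Rightarrow> 'n mpoly"
    and r :: "nat \<Rightarrow> 'n mpoly"
  assumes g0: "g 0 = 1"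
    and S_def: "S = {x. \<forall>i\<in>{1..l}. mpoly_eval (g i) x \<ge> 0}"
    and I_def: "I = ideal_gen m h"
    and K_def: "K = S \<inter> zero_set I"
    and IK: "vanishing_ideal K = I"
    and kg: "\<forall>i\<in>{1..l}. total_deg (g i) \<le> k"
    and kh: "\<forall>j\<in>{1..m}. total_deg (h j) \<le> k"
    and d_def: "\<forall>i\<in>{0..l}. d i = (GREATEST dd. 2 * dd + total_deg (g i) \<le> k)"
    and e_def: "\<forall>j\<in>{1..m}. e j = k - total_deg (h j)"
    and qX: "\<forall>i\<in>{0..l}. \<forall>\<alpha>\<in>Lambda (d i). q i \<alpha> \<in> polys_deg_le (d i)"
    and rX: "\<forall>j\<in>{1..m}. r j \<in> polys_deg_le (e j)"
  shows "(\<Sum>i\<in>{0..l}. \<Sum>\<alpha>\<in>Lambda (d i). (q i \<alpha>)\<^sup>2 * g i) + (\<Sum>j\<in>{1..m}. r j * h j) \<in> I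
     \<longleftrightarrow> (\<forall>i\<in>{0..l}. \<forall>\<alpha>\<in>Lambda (d i). q i \<alpha> \<in> colon_ideal I (g i))"
proof -
  have g_nonneg: "mpoly_eval (g i) x \<ge> 0" if "i \<in> {0..l}" "x \<in> K" for i x
    using that g0 by (cases "i = 0") (auto simp: K_def S_def)
  have "(\<Sum>j\<in>{1..m}. r j * h j) \<in> vanishing_ideal K"
    unfolding IK I_def ideal_gen_def by blast
  from weighted_sos_plus_in_vanishing_ideal_iff
      [where A = "{0..l}" and B = "\<lambda>i. Lambda (d i)" and g = g and q = q, OF _ finite_Lambda g_nonneg this]
  show ?thesis
    by (simp only: IK finite_atLeastAtMost)
qed

end
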